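(* For each fixed $h$, the function $n\mapsto M(n,h)=\frac{n+2-p_{min}(n+h)}{3}$ is non-decreasing in $n$.
   Context: A polyiamond is a planar shape formed by gluing together finitely many congruent (closed) equilateral triangles (tiles) of the regular triangular lattice along their edges: any two tiles that intersect meet in an entire edge, and the union has connected interior. The perimeter of a polyiamond is the number of lattice edges on its topological boundary, and $p_{min}(m)$ is the minimum perimeter over all polyiamonds with $m$ tiles. *)

theory Defs
  imports Complex_Main
begin

text \<open>Using the lattice basis
  u = (1,0), v = (1/2, sqrt 3/2), the cell (x, y, False) is the upward triangle
  with vertices x u + y v, (x+1) u + y v, x u + (y+1) v, and the cell (x, y, True)
  is the downward triangle with vertices (x+1) u + y v, x u + (y+1) v,
  (x+1) u + (y+1) v.\<close>

type_synonym tile = "int \<times> int \<times> bool"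

text \<open>Two tiles share an entire edge.  Up (x,y) shares its three edges with
  Down (x,y), Down (x-1,y) and Down (x,y-1).\<close>

definition tile_adj :: "tile \<Rightarrow> tile \<Rightarrow> bool" where
  "tile_adj s t \<longleftrightarrow>
     (case (s, t) of
        ((x, y, False), (x', y', True)) \<Rightarrow>
            (x', y') = (x, y) \<or> (x', y') = (x - 1, y) \<or> (x', y') = (x, y - 1)
      | ((x, y, True), (x', y', False)) \<Rightarrow>
            (x, y) = (x', y') \<or> (x, y) = (x' - 1, y') \<or> (x, y) = (x', y' - 1)
      | _ \<Rightarrow> False)"

text \<open>A polyiamond: a finite nonempty set of tiles whose union has connected
  interior, i.e. which is connected via edge-adjacency inside the set.\<close>

definition polyiamond :: "tile set \<Rightarrow> bool" where
  "polyiamond P \<longleftrightarrow> finite P \<and> P \<noteq> {} \<and>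
     (\<forall>s\<in>P. \<forall>t\<in>P. (s, t) \<in> {(a, b). a \<in> P \<and> b \<in> P \<and> tile_adj a b}\<^sup>*)"

text \<open>Every lattice edge
  is shared by exactly two tiles; it lies on the topological boundary iff exactly
  one of these two tiles belongs to P.  Such an edge is counted by the unique pair
  (inner tile, outer tile).\<close>

definition perimeter :: "tile set \<Rightarrow> nat" where
  "perimeter P = card {(s, t). s \<in> P \<and> t \<notin> P \<and> tile_adj s t}"

definition pmin :: "nat \<Rightarrow> nat" where
  "pmin m = (LEAST p. \<exists>P. polyiamond P \<and> card P = m \<and> perimeter P = p)"

definition M :: "nat \<Rightarrow> int \<Rightarrow> real" where
  "M n h = (real n + 2 - real (pmin (nat (int n + h)))) / 3"

end

theory Submission
  imports Defs
begin

text \<open>Adding one tile to a polyiamond along a boundary edge keeps it a polyiamond and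
  changes the perimeter by at most one: the shared edge leaves the boundary and at most
  the two other edges of the new tile join it.  Applying this to a polyiamond of minimal
  perimeter gives \<open>pmin (m + 1) \<le> pmin m + 1\<close>, hence \<open>pmin (m + k) \<le> pmin m + k\<close>,
  which is exactly the monotonicity of \<open>M\<close> in \<open>n\<close>.\<close>

fun tile_nbrs :: "tile \<Rightarrow> tile set" where
  "tile_nbrs (x, y, b) =
     (if b then {(x, y, False), (x + 1, y, False), (x, y + 1, False)}
      else {(x, y, True), (x - 1, y, True), (x, y - 1, True)})"

lemma tile_adj_iff_in_tile_nbrs: "tile_adj s t \<longleftrightarrow> t \<in> tile_nbrs s"
proof -
  obtain x y b x' y' b' where "s = (x, y, b)" "t = (x', y', b')" by (metis prod.exhaust)
  then show ?thesis by (cases b; cases b') (auto simp: tile_adj_def)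
qed

lemma tile_adj_sym: "tile_adj s t \<Longrightarrow> tile_adj t s"
  by (cases s; cases t) (auto simp: tile_adj_iff_in_tile_nbrs split: if_splits)

lemma finite_tile_nbrs: "finite (tile_nbrs s)"
  by (cases s) auto

lemma card_tile_nbrs: "card (tile_nbrs s) = 3"
  by (cases s) auto

text \<open>The linear functional \<open>2(x + y) + [down]\<close> increases by one along the edge from an
  up tile to its right neighbour and from a down tile to its upper neighbour, so a tile
  of \<open>P\<close> maximizing it has a neighbour outside \<open>P\<close>.\<close>

lemma finite_tiles_ex_exit:
  assumes "finite P" "P \<noteq> {}"
  obtains s t where "s \<in> P" "t \<notin> P" "tile_adj s t"
proof -
  define f :: "tile \<Rightarrow> int" where "f = (\<lambda>(x, y, b). 2 * (x + y) + (if b then 1 else 0))"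
  have "Max (f ` P) \<in> f ` P" using assms by simp
  then obtain s where sP: "s \<in> P" and "f s = Max (f ` P)" by auto
  then have s_max: "f p \<le> f s" if "p \<in> P" for p
    using that assms(1) by simp
  obtain x y b where s: "s = (x, y, b)" by (cases s) auto
  define t where "t = (if b then (x + 1, y, False) else (x, y, True))"
  have "f t = f s + 1" unfolding t_def s f_def by auto
  then have "t \<notin> P" using s_max by fastforce
  moreover have "tile_adj s t" unfolding tile_adj_iff_in_tile_nbrs t_def s by auto
  ultimately show thesis using sP that by blast
qed

definition adj_within :: "tile set \<Rightarrow> tile rel" where
  "adj_within P = {(a, b). a \<in> P \<and> b \<in> P \<and> tile_adj a b}"

lemma adj_within_mono: "P \<subseteq> Q \<Longrightarrow> adj_within P \<subseteq> adj_within Q"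
  unfolding adj_within_def by auto

lemma polyiamond_iff:
  "polyiamond P \<longleftrightarrow> finite P \<and> P \<noteq> {} \<and> (\<forall>a\<in>P. \<forall>b\<in>P. (a, b) \<in> (adj_within P)\<^sup>*)"
  unfolding polyiamond_def adj_within_def ..

lemma polyiamond_insert_adj:
  assumes P: "polyiamond P" and "s \<in> P" "tile_adj s t"
  shows "polyiamond (insert t P)"
proof -
  let ?R = "(adj_within (insert t P))\<^sup>*"
  have "(a, b) \<in> ?R" if "a \<in> P" "b \<in> P" for a b
    using P that rtrancl_mono[OF adj_within_mono[OF subset_insertI]]
    unfolding polyiamond_iff by blast
  moreover have "(s, t) \<in> ?R" "(t, s) \<in> ?R"
    using \<open>s \<in> P\<close> \<open>tile_adj s t\<close> tile_adj_sym[OF \<open>tile_adj s t\<close>]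
    by (auto simp: adj_within_def intro!: r_into_rtrancl)
  ultimately have "(a, s) \<in> ?R \<and> (s, a) \<in> ?R" if "a \<in> insert t P" for a
    using that \<open>s \<in> P\<close> by blast
  then have "(a, b) \<in> ?R" if "a \<in> insert t P" "b \<in> insert t P" for a b
    using that by (meson rtrancl_trans)
  then show ?thesis
    using P unfolding polyiamond_iff by blast
qed

definition boundary_edges :: "tile set \<Rightarrow> (tile \<times> tile) set" where
  "boundary_edges P = {(s, t). s \<in> P \<and> t \<notin> P \<and> tile_adj s t}"

lemma perimeter_eq_card_boundary_edges: "perimeter P = card (boundary_edges P)"
  unfolding perimeter_def boundary_edges_def ..

lemma finite_boundary_edges: "finite P \<Longrightarrow> finite (boundary_edges P)"
  by (rule finite_subset[of _ "Sigma P tile_nbrs"])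
    (auto simp: boundary_edges_def tile_adj_iff_in_tile_nbrs finite_tile_nbrs)

lemma perimeter_insert_adj_le:
  assumes "finite P" "s \<in> P" "t \<notin> P" "tile_adj s t"
  shows "perimeter (insert t P) \<le> perimeter P + 1"
proof -
  let ?B = "boundary_edges P" and ?N = "tile_nbrs t - {s}"
  have st: "(s, t) \<in> ?B" using assms by (simp add: boundary_edges_def)
  have fin: "finite ?B" using assms(1) by (rule finite_boundary_edges)
  then have "card ?B > 0" using st card_gt_0_iff by blast
  have "boundary_edges (insert t P) \<subseteq> (?B - {(s, t)}) \<union> Pair t ` ?N"
    using assms(2) by (auto simp: boundary_edges_def tile_adj_iff_in_tile_nbrs)
  then have "card (boundary_edges (insert t P)) \<le> card (?B - {(s, t)}) + card (Pair t ` ?N)"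
    by (meson card_Un_le card_mono fin finite_Diff finite_UnI finite_imageI
        finite_tile_nbrs le_trans)
  also have "card (Pair t ` ?N) = card ?N"
    by (rule card_image) (simp add: inj_on_def)
  also have "card ?N = 2"
    using tile_adj_sym[OF assms(4)] card_tile_nbrs[of t] finite_tile_nbrs[of t]
    by (simp add: tile_adj_iff_in_tile_nbrs)
  also have "card (?B - {(s, t)}) = card ?B - 1"
    using st fin by simp
  finally show ?thesis
    using \<open>card ?B > 0\<close> by (simp add: perimeter_eq_card_boundary_edges)
qed

lemma polyiamond_grow:
  assumes "polyiamond P"
  obtains Q where "polyiamond Q" "card Q = Suc (card P)" "perimeter Q \<le> perimeter P + 1"
proof -
  have fin: "finite P" and "P \<noteq> {}" using assms by (auto simp: polyiamond_def)
  then obtain s t where "s \<in> P" "t \<notin> P" "tile_adj s t"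
    by (rule finite_tiles_ex_exit)
  then show thesis
    using that polyiamond_insert_adj[OF assms] perimeter_insert_adj_le[OF fin] fin
    by (metis card_insert_disjoint)
qed

lemma ex_polyiamond_card: "m \<ge> 1 \<Longrightarrow> \<exists>P. polyiamond P \<and> card P = m"
proof (induction m rule: nat_induct_at_least)
  case base
  have "polyiamond {(0, 0, False)}" by (simp add: polyiamond_def)
  then show ?case by force
next
  case (Suc m)
  then show ?case by (metis polyiamond_grow)
qed

lemma pmin_attained:
  assumes "m \<ge> 1"
  obtains P where "polyiamond P" "card P = m" "perimeter P = pmin m"
proof -
  have "\<exists>p P. polyiamond P \<and> card P = m \<and> perimeter P = p"
    using ex_polyiamond_card[OF assms] by blast
  from LeastI_ex[OF this] show thesis
    using that unfolding pmin_def by blast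
qed

lemma pmin_le_perimeter: "polyiamond P \<Longrightarrow> pmin (card P) \<le> perimeter P"
  unfolding pmin_def by (rule Least_le) blast

lemma pmin_Suc_le: "m \<ge> 1 \<Longrightarrow> pmin (Suc m) \<le> pmin m + 1"
  by (metis pmin_attained polyiamond_grow pmin_le_perimeter le_trans)

lemma pmin_add_le: "m \<ge> 1 \<Longrightarrow> pmin (m + k) \<le> pmin m + k"
  by (induction k) (auto intro: le_trans[OF pmin_Suc_le])

theorem lemma3:
  fixes h :: int and n n' :: nat
  assumes "1 \<le> int n + h" and "n \<le> n'"
  shows "M n h \<le> M n' h"
proof -
  define m k where "m = nat (int n + h)" and "k = n' - n"
  have "nat (int n' + h) = m + k" and "real n' = real n + real k"
    using assms by (simp_all add: m_def k_def)
  moreover have "real (pmin (m + k)) \<le> real (pmin m) + real k"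
    using pmin_add_le[of m k] assms(1) unfolding m_def by linarith
  ultimately show ?thesis
    unfolding M_def m_def[symmetric] by (simp add: divide_right_mono)
qed

end
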